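(* Let $R,S$ be finite nonempty sets, $k$ a positive integer, $p_r>0$ ($r\in R$), $T=\sum_{r\in R}p_r$, $d_{r,s}\ge0$, and $\kappa<0$. Let $F$ be the set of $(\mathbf x,\mathbf y)$ with $x_s,y_{r,s}\in\{0,1\}$, $\sum_{s\in S}x_s=k$, $y_{r,s}\le x_s$, and $\sum_{s\in S}y_{r,s}=1$ for all $r$. For $\mathbf y$ let $\overline{\mathcal K}(\mathbf y)=\sum_{r,s}p_ry_{r,s}e^{-\kappa d_{r,s}}$ and $\mathcal K(\mathbf y)=-\frac1\kappa\ln\left(\frac1T\overline{\mathcal K}(\mathbf y)\right)$. Let $U\subseteq S$, $c_s\ge0$ for $s\in U$, $\sigma(\mathbf x)=\sum_{s\in U}c_sx_s$, $\sigma^{max}=\max_{(\mathbf x,\mathbf y)\in F}\sigma(\mathbf x)$. Let $(\mathbf x^{all},\mathbf y^{all})$ be optimal for $\min\{\overline{\mathcal K}(\mathbf y):(\mathbf x,\mathbf y)\in F\}$, $\mathcal K^{all}=\mathcal K(\mathbf y^{all})$, $\sigma^{all}=\sigma(\mathbf x^{all})$. Set $\hat{\mathcal K}=\mathcal K^{all}$ and let $(\mathbf x^*,\mathbf y^*,v^*,q^* )$ be optimal for \[ \text{(KPL}^p)\quad \min\ \overline{\mathcal K}(\mathbf y)+Te^{-\kappa\hat{\mathcal K}}(v-1)\ \text{ s.t. } (\mathbf x,\mathbf y)\in F,\ v\ge e^{q},\ q=-\kappa\,\sigma(\mathbf x), \] with $\sigma^*=\sigma(\mathbf x^* )$, $q^*=-\kappa\sigma^*$,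 $\mathcal K^*=\mathcal K(\mathbf y^* )$. Let $w\in(0,1)$, $\beta_i=iw$ for $i=0,\dots,n$ with $nw>-\kappa\sigma^{max}$, and $g(q)=\max_{0\le i\le n}\left(e^{\beta_i}+e^{\beta_i}(q-\beta_i)\right)$ (the tangent-line approximation of $e^q$ in the linearized model (KPL$^t$)). Define $\ddot\sigma$ by \[ \mathcal K^*+\ddot\sigma=-\tfrac1\kappa\ln\left(\tfrac1T\left(\overline{\mathcal K}(\mathbf y^* )+Te^{-\kappa\hat{\mathcal K}}\left(g(q^* )-1\right)\right)\right), \] and let $A(w):=e^{\frac{we^w}{e^w-1}-1}-\frac{we^w}{e^w-1}$. Then the penalized locations are under-penalized and \[ 0\le\sigma^*-\ddot\sigma\le\sigma^{all}\left(1-e^{\kappa\sigma^*}\right)+\frac1\kappa\ln\left(1-A(w)\right). \] If, in addition, $c_s=c$ for all $s\in U$ and $w=-\kappa c$, then \[ 0\le\sigma^*-\ddot\sigma\le\sigma^{all}\left(1-e^{\kappa\sigma^*}\right). \]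
   Context: $U$ is a set of less desirable potential facility locations with distance penalties $c_s$; $\sigma^*$ is the intended penalty of the optimal solution of the penalized Kolm–Pollak model and $\ddot\sigma$ the penalty actually applied to the optimal Kolm–Pollak score by the linearized penalized model, which uses the approximation $\hat{\mathcal K}=\mathcal K^{all}$ of the optimal unpenalized score. *)

theory Defs
  imports Complex_Main
begin

text \<open>Decision variables are
real-valued functions; entries are restricted to {0,1} on S (resp. R x S) and fixed to 0
outside, so that F is a finite set of pairs of functions.\<close>
definition feasF :: "'r set \<Rightarrow> 's set \<Rightarrow> nat \<Rightarrow> (('s \<Rightarrow> real) \<times> ('r \<Rightarrow> 's \<Rightarrow> real)) set" where
  "feasF R S k = {(x, y).
      (\<forall>s\<in>S. x s \<in> {0, 1}) \<and> (\<forall>s. s \<notin> S \<longrightarrow> x s = 0) \<and>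
      (\<forall>r\<in>R. \<forall>s\<in>S. y r s \<in> {0, 1}) \<and> (\<forall>r s. (r \<notin> R \<or> s \<notin> S) \<longrightarrow> y r s = 0) \<and>
      (\<Sum>s\<in>S. x s) = real k \<and>
      (\<forall>r\<in>R. \<forall>s\<in>S. y r s \<le> x s) \<and>
      (\<forall>r\<in>R. (\<Sum>s\<in>S. y r s) = 1)}"

definition Kbar :: "'r set \<Rightarrow> 's set \<Rightarrow> ('r \<Rightarrow> real) \<Rightarrow> ('r \<Rightarrow> 's \<Rightarrow> real) \<Rightarrow> real
    \<Rightarrow> ('r \<Rightarrow> 's \<Rightarrow> real) \<Rightarrow> real" where
  "Kbar R S p d \<kappa> y = (\<Sum>r\<in>R. \<Sum>s\<in>S. p r * y r s * exp (- \<kappa> * d r s))"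

definition KP :: "'r set \<Rightarrow> 's set \<Rightarrow> ('r \<Rightarrow> real) \<Rightarrow> ('r \<Rightarrow> 's \<Rightarrow> real) \<Rightarrow> real
    \<Rightarrow> ('r \<Rightarrow> 's \<Rightarrow> real) \<Rightarrow> real" where
  "KP R S p d \<kappa> y = - (1 / \<kappa>) * ln ((1 / (\<Sum>r\<in>R. p r)) * Kbar R S p d \<kappa> y)"

definition pen :: "'s set \<Rightarrow> ('s \<Rightarrow> real) \<Rightarrow> ('s \<Rightarrow> real) \<Rightarrow> real" where
  "pen U c x = (\<Sum>s\<in>U. c s * x s)"

definition gtan :: "nat \<Rightarrow> real \<Rightarrow> real \<Rightarrow> real" where
  "gtan n w q = Max ((\<lambda>i. exp (real i * w) + exp (real i * w) * (q - real i * w)) ` {0..n})"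

definition Afun :: "real \<Rightarrow> real" where
  "Afun w = exp (w * exp w / (exp w - 1) - 1) - w * exp w / (exp w - 1)"

end

theory Submission
  imports Defs
begin

(* Write K = -kappa > 0, q = K sigma_st, q_all = K sigma_all and rho = Kbar(y_all) / Kbar(y_st),
   which lies in (0,1] by optimality of y_all.  Since T e^(-kappa Khat) = Kbar(y_all), the
   linearized penalty is sigma_dd = ln(1 + rho (g(q) - 1)) / K, and comparing the optimum of
   (KPL^p) with the feasible point (x_all, y_all, e^q_all, q_all) gives
   1/rho + e^q - 1 <= e^q_all.  As g lies below e^q, sigma_dd <= sigma_st.
   Conversely, on [0, w] the exponential exceeds the larger of its tangents at 0 and w by at
   most A(w), the gap where these tangents cross; shifting by multiples of w gives
   g(q) >= (1 - A(w)) e^q.  With the comparison inequality and the elementary estimate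
   ln(e^q_all - e^q + 1) <= q_all - q + q_all (1 - e^-q) this yields the upper bound.  If all
   penalties equal c and w = -kappa c, then q is a breakpoint of g, so g(q) = e^q and A(w)
   can be replaced by 0. *)

lemma exp_tangent_le: "exp b + exp b * (q - b) \<le> exp (q::real)"
proof -
  have "exp b * (1 + (q - b)) \<le> exp b * exp (q - b)"
    by (rule mult_left_mono) auto
  then show ?thesis
    by (simp add: algebra_simps exp_diff)
qed

lemma gtan_le_exp: "gtan n w q \<le> exp q"
  unfolding gtan_def by (rule Max.boundedI) (auto intro: exp_tangent_le)

lemma tangent_le_gtan:
  "i \<le> n \<Longrightarrow> exp (real i * w) + exp (real i * w) * (q - real i * w) \<le> gtan n w q"
  unfolding gtan_def by (rule Max_ge) auto

lemma one_le_gtan: "0 \<le> q \<Longrightarrow> 1 \<le> gtan n w q"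
  using tangent_le_gtan[of 0 n w q] by simp

lemma gtan_breakpoint: "i \<le> n \<Longrightarrow> gtan n w (real i * w) = exp (real i * w)"
  using tangent_le_gtan[of i n w "real i * w"] gtan_le_exp[of n w "real i * w"] by simp

text \<open>The abscissa at which the tangents of \<open>exp\<close> at \<open>0\<close> and at \<open>w\<close> meet;
  \<^const>\<open>Afun\<close> is the gap between \<open>exp\<close> and these tangents there.\<close>

definition tangent_crossing :: "real \<Rightarrow> real" where
  "tangent_crossing w = w * exp w / (exp w - 1) - 1"

lemma Afun_eq_tangent_crossing:
  "Afun w = exp (tangent_crossing w) - 1 - tangent_crossing w"
  unfolding Afun_def tangent_crossing_def by simp

lemma tangent_crossing_meets:
  assumes "0 < w"
  shows "exp w * (1 + tangent_crossing w - w) = 1 + tangent_crossing w"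
  using assms unfolding tangent_crossing_def by (simp add: field_simps)

lemma tangent_crossing_nonneg:
  assumes "0 < w"
  shows "0 \<le> tangent_crossing w"
proof -
  have "1 - w \<le> exp (- w)"
    using exp_ge_add_one_self[of "- w"] by simp
  then have "exp w * (1 - w) \<le> 1"
    using mult_left_mono[of "1 - w" "exp (- w)" "exp w"] by (simp add: exp_minus)
  then show ?thesis
    using assms unfolding tangent_crossing_def by (simp add: field_simps)
qed

lemma tangent_crossing_le:
  assumes "0 < w"
  shows "tangent_crossing w \<le> w"
proof -
  have "w * exp w \<le> (w + 1) * (exp w - 1)"
    using exp_ge_add_one_self[of w] by (simp add: algebra_simps)
  then show ?thesis
    using assms unfolding tangent_crossing_def by (simp add: field_simps)
qed

lemma Afun_nonneg: "0 \<le> Afun w"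
  unfolding Afun_eq_tangent_crossing using exp_ge_add_one_self[of "tangent_crossing w"] by linarith

lemma Afun_less_one:
  assumes "0 < w" "w < 1"
  shows "Afun w < 1"
proof -
  define t where "t = tangent_crossing w"
  have t: "0 \<le> t" "t < 1"
    using tangent_crossing_nonneg[of w] tangent_crossing_le[of w] assms by (auto simp: t_def)
  then have "exp t \<le> 1 + t + t\<^sup>2"
    by (intro exp_bound) auto
  moreover have "t\<^sup>2 < 1"
    using t by (simp add: abs_square_less_1)
  ultimately show ?thesis
    by (simp add: Afun_eq_tangent_crossing t_def)
qed

lemma exp_le_tangents_plus_Afun:
  assumes "0 < w" "0 \<le> s" "s \<le> w"
  shows "exp s \<le> max (1 + s) (exp w * (1 + s - w)) + Afun w"
proof -
  define t where "t = tangent_crossing w"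
  have A: "Afun w = exp t - 1 - t"
    by (simp add: Afun_eq_tangent_crossing t_def)
  have tangent_at_s: "exp s + exp s * (t - s) \<le> exp t"
    by (rule exp_tangent_le)
  show ?thesis
  proof (cases "s \<le> t")
    case True
    have "1 * (t - s) \<le> exp s * (t - s)"
      using True assms by (intro mult_right_mono) auto
    then have "exp s \<le> 1 + s + Afun w"
      using tangent_at_s A by simp
    then show ?thesis
      by linarith
  next
    case False
    have "exp s * (s - t) \<le> exp w * (s - t)"
      using False assms by (intro mult_right_mono) auto
    then have "exp s \<le> exp w * (1 + t - w) + exp w * (s - t) + Afun w"
      using tangent_at_s A tangent_crossing_meets[OF assms(1)] by (simp add: t_def algebra_simps)
    also have "\<dots> = exp w * (1 + s - w) + Afun w"
      by (simp add: algebra_simps)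
    finally show ?thesis
      by linarith
  qed
qed

lemma gtan_ge_scaled_exp:
  assumes "0 < w" "0 \<le> q" "q < real n * w"
  shows "(1 - Afun w) * exp q \<le> gtan n w q"
proof -
  define i where "i = nat \<lfloor>q / w\<rfloor>"
  have i: "real i \<le> q / w" "q / w < real i + 1"
    using assms by (simp_all add: i_def of_nat_nat)
  have "q / w < real n"
    using assms by (simp add: field_simps)
  then have "Suc i \<le> n"
    using i by simp
  define b where "b = real i * w"
  define s where "s = q - b"
  have s: "0 \<le> s" "s \<le> w"
    using i assms by (simp_all add: s_def b_def field_simps)
  have left: "exp b * (1 + s) \<le> gtan n w q"
    using tangent_le_gtan[of i n w q] \<open>Suc i \<le> n\<close> by (simp add: b_def s_def algebra_simps)
  have "exp b * (exp w * (1 + s - w))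
      = exp (real (Suc i) * w) + exp (real (Suc i) * w) * (q - real (Suc i) * w)"
    by (simp add: s_def b_def algebra_simps flip: exp_add)
  then have right: "exp b * (exp w * (1 + s - w)) \<le> gtan n w q"
    using tangent_le_gtan[OF \<open>Suc i \<le> n\<close>, of w q] by simp
  have tangents: "exp b * max (1 + s) (exp w * (1 + s - w)) \<le> gtan n w q"
    using left right by (simp add: max_def)
  have "exp b * Afun w \<le> exp q * Afun w"
    using Afun_nonneg[of w] \<open>0 \<le> s\<close> by (intro mult_right_mono) (auto simp: s_def)
  moreover have "exp q = exp b * exp s"
    by (simp add: s_def flip: exp_add)
  moreover have "exp b * exp s \<le> exp b * (max (1 + s) (exp w * (1 + s - w)) + Afun w)"
    using exp_le_tangents_plus_Afun[OF assms(1) s] by simp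
  ultimately show ?thesis
    using tangents by (simp add: algebra_simps)
qed

lemma ln_exp_diff_add_one_le:
  fixes x y :: real
  assumes "0 \<le> x" "x \<le> y"
  shows "ln (exp y - exp x + 1) \<le> y - x + y * (1 - exp (- x))"
proof -
  define z where "z = (1 - exp (- x)) * exp (x - y)"
  have z: "exp y - exp x + 1 = exp y * (1 - z)"
    by (simp add: z_def algebra_simps flip: exp_add exp_diff)
  have "exp x \<le> exp y"
    using assms by simp
  then have "0 < exp y * (1 - z)"
    using z by linarith
  then have "0 < 1 - z"
    by (simp add: zero_less_mult_iff)
  then have "ln (exp y - exp x + 1) = y + ln (1 - z)"
    by (simp add: z ln_mult)
  also have "\<dots> \<le> y - z"
    using ln_le_minus_one[of "1 - z"] \<open>0 < 1 - z\<close> by simp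
  finally have ln_le: "ln (exp y - exp x + 1) \<le> y - z" .
  have "(1 - exp (- x)) * (1 + (x - y)) \<le> z"
    unfolding z_def using assms by (intro mult_left_mono) auto
  moreover have "exp (- x) * (1 + x) \<le> 1"
    using mult_left_mono[OF exp_ge_add_one_self[of x], of "exp (- x)"] by (simp flip: exp_add)
  ultimately have "x - y + y * exp (- x) \<le> z"
    by (simp add: algebra_simps)
  with ln_le show ?thesis
    by (simp add: algebra_simps)
qed

lemma ln_interpolation_le:
  fixes \<rho> g q :: real
  assumes "0 \<le> \<rho>" "\<rho> \<le> 1" "1 \<le> g" "g \<le> exp q"
  shows "ln (1 + \<rho> * (g - 1)) \<le> q"
proof -
  have "\<rho> * (g - 1) \<le> g - 1"
    using assms by (intro mult_left_le_one_le) auto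
  then have "1 + \<rho> * (g - 1) \<le> exp q" and "0 < 1 + \<rho> * (g - 1)"
    using assms by (auto intro: add_pos_nonneg)
  then show ?thesis
    by (metis ln_exp ln_le_cancel_iff exp_gt_zero)
qed

lemma ln_interpolation_ge:
  fixes \<rho> g q qa L :: real
  assumes \<rho>: "0 < \<rho>" "\<rho> \<le> 1" and "0 \<le> q"
    and compare: "1 / \<rho> + exp q - 1 \<le> exp qa"
    and L: "0 < L" "L \<le> 1" "L * exp q \<le> g"
  shows "q - ln (1 + \<rho> * (g - 1)) \<le> qa * (1 - exp (- q)) - ln L"
proof -
  define D where "D = exp qa - exp q + 1"
  have "1 \<le> 1 / \<rho>" "1 / \<rho> \<le> D"
    using \<rho> compare by (simp_all add: D_def field_simps)
  then have "1 \<le> D"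
    by linarith
  with \<open>1 / \<rho> \<le> D\<close> \<rho> have D: "1 \<le> D" "1 / D \<le> \<rho>"
    by (simp_all add: field_simps)
  then have "q \<le> qa"
    by (simp add: D_def)
  have "L * (1 + \<rho> * (exp q - 1)) \<le> 1 + \<rho> * (L * exp q - 1)"
    using \<rho> L mult_nonneg_nonneg[of "1 - L" "1 - \<rho>"] by (simp add: algebra_simps)
  also have "\<dots> \<le> 1 + \<rho> * (g - 1)"
    using \<rho> L by simp
  finally have interpolation: "L * (1 + \<rho> * (exp q - 1)) \<le> 1 + \<rho> * (g - 1)" .
  have "1 / D * (exp q - 1) \<le> \<rho> * (exp q - 1)"
    using D \<open>0 \<le> q\<close> by (intro mult_right_mono) auto
  moreover have "1 + 1 / D * (exp q - 1) = (D + exp q - 1) / D"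
    using D by (simp add: field_simps)
  then have "1 + 1 / D * (exp q - 1) = exp qa / D"
    by (simp add: D_def)
  ultimately have "L * (exp qa / D) \<le> L * (1 + \<rho> * (exp q - 1))"
    using L by (intro mult_left_mono) auto
  with interpolation have "L * (exp qa / D) \<le> 1 + \<rho> * (g - 1)"
    by linarith
  moreover have "0 < L * (exp qa / D)"
    using L D by simp
  ultimately have "ln (L * (exp qa / D)) \<le> ln (1 + \<rho> * (g - 1))"
    by simp
  moreover have "ln (L * (exp qa / D)) = ln L + qa - ln D"
    using L D by (simp add: ln_mult ln_div)
  moreover have "ln D \<le> qa - q + qa * (1 - exp (- q))"
    unfolding D_def using ln_exp_diff_add_one_le[OF \<open>0 \<le> q\<close> \<open>q \<le> qa\<close>] .
  ultimately show ?thesis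
    by simp
qed

lemma penalty_gap_bounds:
  fixes K \<sigma> \<sigma>a \<rho> g L :: real
  assumes "0 < K" "0 < \<rho>" "\<rho> \<le> 1" "0 \<le> \<sigma>"
    and compare: "1 / \<rho> + exp (K * \<sigma>) - 1 \<le> exp (K * \<sigma>a)"
    and g: "1 \<le> g" "g \<le> exp (K * \<sigma>)"
    and L: "0 < L" "L \<le> 1" "L * exp (K * \<sigma>) \<le> g"
  shows "0 \<le> \<sigma> - ln (1 + \<rho> * (g - 1)) / K"
    and "\<sigma> - ln (1 + \<rho> * (g - 1)) / K \<le> \<sigma>a * (1 - exp (- K * \<sigma>)) - ln L / K"
proof -
  have "0 \<le> K * \<sigma>"
    using assms by simp
  have "ln (1 + \<rho> * (g - 1)) \<le> K * \<sigma>"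
    using ln_interpolation_le assms by simp
  then show "0 \<le> \<sigma> - ln (1 + \<rho> * (g - 1)) / K"
    using \<open>0 < K\<close> by (simp add: field_simps)
  have "K * \<sigma> - ln (1 + \<rho> * (g - 1)) \<le> K * \<sigma>a * (1 - exp (- (K * \<sigma>))) - ln L"
    using ln_interpolation_ge[OF \<open>0 < \<rho>\<close> \<open>\<rho> \<le> 1\<close> \<open>0 \<le> K * \<sigma>\<close> compare L] .
  then have "(K * \<sigma> - ln (1 + \<rho> * (g - 1))) / K \<le> (K * \<sigma>a * (1 - exp (- (K * \<sigma>))) - ln L) / K"
    using \<open>0 < K\<close> by (simp add: divide_right_mono)
  then show "\<sigma> - ln (1 + \<rho> * (g - 1)) / K \<le> \<sigma>a * (1 - exp (- K * \<sigma>)) - ln L / K"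
    using \<open>0 < K\<close> by (simp add: diff_divide_distrib)
qed

lemma feasF_finite:
  assumes "finite R" "finite S"
  shows "finite (feasF R S k)"
proof -
  let ?X = "{x. \<forall>s. (s \<in> S \<longrightarrow> x s \<in> {0, 1}) \<and> (s \<notin> S \<longrightarrow> x s = (0::real))}"
  let ?Y = "{f. \<forall>z. (z \<in> R \<times> S \<longrightarrow> f z \<in> {0, 1}) \<and> (z \<notin> R \<times> S \<longrightarrow> f z = (0::real))}"
  have "(x, y) \<in> ?X \<times> curry ` ?Y" if "(x, y) \<in> feasF R S k" for x y
proof -
    have "x \<in> ?X" "case_prod y \<in> ?Y"
      using that unfolding feasF_def by auto
    moreover have "y = curry (case_prod y)"
      by simp
    ultimately show ?thesis
      by blast
  qed
  then have "feasF R S k \<subseteq> ?X \<times> curry ` ?Y"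
    by (rule subrelI)
  moreover have "finite ?X" "finite ?Y"
    using assms by (intro finite_set_of_finite_funs; simp)+
  ultimately show ?thesis
    by (meson finite_SigmaI finite_imageI finite_subset)
qed

lemma pen_le_Max_pen:
  assumes "finite R" "finite S" "(x, y) \<in> feasF R S k"
  shows "pen U c x \<le> Max ((\<lambda>(x, y). pen U c x) ` feasF R S k)"
  using assms feasF_finite[OF assms(1,2)] by (force intro: Max_ge)

lemma feasF_location_01:
  "(x, y) \<in> feasF R S k \<Longrightarrow> s \<in> S \<Longrightarrow> x s \<in> {0, 1}"
  unfolding feasF_def by auto

lemma Kbar_pos:
  assumes "finite R" "R \<noteq> {}" "finite S" "\<forall>r\<in>R. 0 < p r" "(x, y) \<in> feasF R S k"
  shows "0 < Kbar R S p d \<kappa> y"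
  unfolding Kbar_def
proof (rule sum_pos[OF assms(1,2)])
  fix r assume r: "r \<in> R"
  have y01: "\<forall>s\<in>S. y r s \<in> {0, 1}" and "(\<Sum>s\<in>S. y r s) = 1"
    using assms(5) r unfolding feasF_def by auto
  then obtain s where "s \<in> S" "y r s \<noteq> 0"
    by (metis sum.neutral zero_neq_one)
  with y01 have s: "s \<in> S" "y r s = 1"
    by auto
  show "0 < (\<Sum>s\<in>S. p r * y r s * exp (- \<kappa> * d r s))"
  proof (rule sum_pos2[OF assms(3) s(1)])
    show "0 < p r * y r s * exp (- \<kappa> * d r s)"
      using s assms(4) r by simp
    show "0 \<le> p r * y r s' * exp (- \<kappa> * d r s')" if "s' \<in> S" for s'
      using that y01 assms(4) r by (auto simp: less_imp_le)
  qed
qed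

lemma pen_nonneg:
  assumes "U \<subseteq> S" "\<forall>s\<in>U. 0 \<le> c s" "(x, y) \<in> feasF R S k"
  shows "0 \<le> pen U c x"
  unfolding pen_def using assms feasF_location_01[OF assms(3)] by (force intro: sum_nonneg)

lemma pen_uniform:
  assumes "finite U" "\<forall>s\<in>U. c s = cc" "\<forall>s\<in>U. x s \<in> {0, 1}"
  shows "pen U c x = cc * real (card {s\<in>U. x s = 1})"
proof -
  have "pen U c x = cc * (\<Sum>s\<in>U. if x s = 1 then 1 else 0)"
    unfolding pen_def sum_distrib_left using assms(2,3) by (intro sum.cong) auto
  also have "\<dots> = cc * real (card {s\<in>U. x s = 1})"
    using assms(1) by (simp add: sum.If_cases Int_def conj_commute)
  finally show ?thesis .
qed

lemma gtan_at_uniform_penalty: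
  assumes "finite U" "\<forall>s\<in>U. c s = cc" "\<forall>s\<in>U. x s \<in> {0, 1}"
    and "0 < w" "w = K * cc" "K * pen U c x < real n * w"
  shows "gtan n w (K * pen U c x) = exp (K * pen U c x)"
proof -
  define m where "m = card {s\<in>U. x s = 1}"
  have "K * pen U c x = real m * w"
    using pen_uniform[OF assms(1-3)] assms(5) by (simp add: m_def)
  moreover from this have "m \<le> n"
    using assms(4,6) by simp
  ultimately show ?thesis
    using gtan_breakpoint by simp
qed

lemma exp_KP:
  assumes "\<kappa> \<noteq> 0" "0 < sum p R" "0 < Kbar R S p d \<kappa> y"
  shows "sum p R * exp (- \<kappa> * KP R S p d \<kappa> y) = Kbar R S p d \<kappa> y"
  using assms by (simp add: KP_def)

lemma KP_shift:
  assumes "\<kappa> \<noteq> 0" "0 < sum p R" "0 < Kbar R S p d \<kappa> y"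
    and "0 < 1 + B / Kbar R S p d \<kappa> y * (g - 1)"
    and "KP R S p d \<kappa> y + \<delta>
      = - (1 / \<kappa>) * ln (1 / sum p R * (Kbar R S p d \<kappa> y + B * (g - 1)))"
  shows "\<delta> = ln (1 + B / Kbar R S p d \<kappa> y * (g - 1)) / - \<kappa>"
proof -
  let ?a = "Kbar R S p d \<kappa> y" and ?Y = "1 + B / Kbar R S p d \<kappa> y * (g - 1)"
  have "?a + B * (g - 1) = ?a * ?Y"
    using assms(3) by (simp add: distrib_left)
  then have "1 / sum p R * (?a + B * (g - 1)) = (1 / sum p R * ?a) * ?Y"
    by simp
  then have "ln (1 / sum p R * (?a + B * (g - 1))) = ln (1 / sum p R * ?a) + ln ?Y"
    using assms(2-4) by (simp add: ln_mult ln_div)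
  then have "KP R S p d \<kappa> y + \<delta> = - (1 / \<kappa>) * (ln (1 / sum p R * ?a) + ln ?Y)"
    using assms(5) by simp
  then have "\<delta> = - (1 / \<kappa>) * ln ?Y"
    by (simp add: KP_def algebra_simps)
  then show ?thesis
    by simp
qed

theorem corollary3:
  fixes R :: "'r set" and S :: "'s set" and k :: nat
    and p :: "'r \<Rightarrow> real" and d :: "'r \<Rightarrow> 's \<Rightarrow> real" and \<kappa> :: real
    and U :: "'s set" and c :: "'s \<Rightarrow> real"
    and xa :: "'s \<Rightarrow> real" and ya :: "'r \<Rightarrow> 's \<Rightarrow> real"
    and xs :: "'s \<Rightarrow> real" and ys :: "'r \<Rightarrow> 's \<Rightarrow> real" and vs qs :: real
    and w :: real and n :: nat and \<sigma>dd :: real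
  defines "T \<equiv> (\<Sum>r\<in>R. p r)"
    and "F \<equiv> feasF R S k"
    and "\<sigma>max \<equiv> Max ((\<lambda>(x, y). pen U c x) ` feasF R S k)"
    and "Khat \<equiv> KP R S p d \<kappa> ya"
    and "\<sigma>all \<equiv> pen U c xa"
    and "\<sigma>st \<equiv> pen U c xs"
  assumes R_fin: "finite R" and R_ne: "R \<noteq> {}"
    and S_fin: "finite S" and S_ne: "S \<noteq> {}"
    and k_pos: "k > 0"
    and p_pos: "\<forall>r\<in>R. p r > 0"
    and d_nonneg: "\<forall>r\<in>R. \<forall>s\<in>S. d r s \<ge> 0"
    and kappa_neg: "\<kappa> < 0"
    and U_sub: "U \<subseteq> S"
    and c_nonneg: "\<forall>s\<in>U. c s \<ge> 0"
    and all_feas: "(xa, ya) \<in> F"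
    and all_opt: "\<forall>(x, y)\<in>F. Kbar R S p d \<kappa> ya \<le> Kbar R S p d \<kappa> y"
    and st_feas: "(xs, ys) \<in> F" "vs \<ge> exp qs" "qs = - \<kappa> * pen U c xs"
    and st_opt: "\<forall>x y v q. (x, y) \<in> F \<and> v \<ge> exp q \<and> q = - \<kappa> * pen U c x \<longrightarrow>
        Kbar R S p d \<kappa> ys + T * exp (- \<kappa> * Khat) * (vs - 1)
          \<le> Kbar R S p d \<kappa> y + T * exp (- \<kappa> * Khat) * (v - 1)"
    and w_range: "0 < w" "w < 1"
    and n_large: "real n * w > - \<kappa> * \<sigma>max"
    and \<sigma>dd_def: "KP R S p d \<kappa> ys + \<sigma>dd =
        - (1 / \<kappa>) * ln ((1 / T) * (Kbar R S p d \<kappa> ys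
            + T * exp (- \<kappa> * Khat) * (gtan n w (- \<kappa> * \<sigma>st) - 1)))"
  shows "0 \<le> \<sigma>st - \<sigma>dd \<and>
         \<sigma>st - \<sigma>dd \<le> \<sigma>all * (1 - exp (\<kappa> * \<sigma>st)) + (1 / \<kappa>) * ln (1 - Afun w) \<and>
         (\<forall>cc. (\<forall>s\<in>U. c s = cc) \<and> w = - \<kappa> * cc \<longrightarrow>
            0 \<le> \<sigma>st - \<sigma>dd \<and> \<sigma>st - \<sigma>dd \<le> \<sigma>all * (1 - exp (\<kappa> * \<sigma>st)))"
proof -
  define K where "K = - \<kappa>"
  define a where "a = Kbar R S p d \<kappa> ys"
  define B where "B = Kbar R S p d \<kappa> ya"
  define q where "q = K * \<sigma>st"
  define g where "g = gtan n w q"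
  have "0 < K" "0 < T"
    using kappa_neg p_pos R_fin R_ne by (auto simp: K_def T_def intro: sum_pos)
  have "0 < a" "0 < B" "B \<le> a"
    using Kbar_pos[OF R_fin R_ne S_fin p_pos] st_feas(1) all_feas all_opt
    by (auto simp: a_def B_def F_def)
  have "0 \<le> \<sigma>st"
    using pen_nonneg U_sub c_nonneg st_feas(1) unfolding \<sigma>st_def F_def by blast
  then have "0 \<le> q"
    using \<open>0 < K\<close> by (simp add: q_def)
  have scale_Khat: "T * exp (- \<kappa> * Khat) = B"
    using exp_KP[of \<kappa> p R S d ya] \<open>0 < T\<close> \<open>0 < B\<close> kappa_neg by (simp add: T_def Khat_def B_def)
  have "a + B * vs - B \<le> B * exp (K * \<sigma>all)"
    using st_opt[rule_format, of xa ya "K * \<sigma>all" "exp (K * \<sigma>all)"] all_feas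
    unfolding scale_Khat by (simp add: a_def B_def K_def \<sigma>all_def algebra_simps)
  moreover have "B * exp q \<le> B * vs"
    using st_feas(2,3) \<open>0 < B\<close> by (simp add: q_def K_def \<sigma>st_def)
  ultimately have "a + B * exp q - B \<le> B * exp (K * \<sigma>all)"
    by linarith
  then have compare: "1 / (B / a) + exp q - 1 \<le> exp (K * \<sigma>all)"
    using \<open>0 < a\<close> \<open>0 < B\<close> by (simp add: field_simps)
  have "1 \<le> g" "g \<le> exp q"
    using one_le_gtan gtan_le_exp \<open>0 < K\<close> \<open>0 \<le> \<sigma>st\<close> by (simp_all add: g_def q_def)
  have "KP R S p d \<kappa> ys + \<sigma>dd
      = - (1 / \<kappa>) * ln (1 / sum p R * (Kbar R S p d \<kappa> ys + B * (g - 1)))"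
    using \<sigma>dd_def[unfolded scale_Khat] unfolding T_def g_def q_def K_def by simp
  moreover have "0 < 1 + B / a * (g - 1)"
    using \<open>0 < a\<close> \<open>0 < B\<close> \<open>1 \<le> g\<close> by (simp add: add_pos_nonneg)
  ultimately have \<sigma>dd: "\<sigma>dd = ln (1 + B / a * (g - 1)) / K"
    using KP_shift[of \<kappa> p R S d ys B g \<sigma>dd] kappa_neg \<open>0 < T\<close> \<open>0 < a\<close>
    by (simp add: a_def K_def T_def)
  have bounds: "0 \<le> \<sigma>st - \<sigma>dd \<and> \<sigma>st - \<sigma>dd \<le> \<sigma>all * (1 - exp (\<kappa> * \<sigma>st)) + 1 / \<kappa> * ln L"
    if "0 < L" "L \<le> 1" "L * exp q \<le> g" for L
    using penalty_gap_bounds[of K "B / a" \<sigma>st \<sigma>all g L] that compare \<open>1 \<le> g\<close> \<open>g \<le> exp q\<close>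
      \<open>0 < K\<close> \<open>0 < a\<close> \<open>0 < B\<close> \<open>B \<le> a\<close> \<open>0 \<le> \<sigma>st\<close>
    by (simp add: \<sigma>dd q_def K_def)
  have "\<sigma>st \<le> \<sigma>max"
    using pen_le_Max_pen[OF R_fin S_fin] st_feas(1) unfolding \<sigma>st_def \<sigma>max_def F_def .
  then have "q < real n * w"
    using n_large \<open>0 < K\<close> mult_left_mono[of \<sigma>st \<sigma>max K] unfolding q_def K_def by linarith
  then have "(1 - Afun w) * exp q \<le> g"
    unfolding g_def by (rule gtan_ge_scaled_exp[OF w_range(1) \<open>0 \<le> q\<close>])
  moreover have "exp q \<le> g" if "\<forall>s\<in>U. c s = cc" "w = - \<kappa> * cc" for cc
  proof -
    have "finite U" "\<forall>s\<in>U. xs s \<in> {0, 1}"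
      using U_sub S_fin finite_subset feasF_location_01[of xs ys R S k] st_feas(1)
      unfolding F_def by blast+
    then show ?thesis
      using gtan_at_uniform_penalty[of U c cc xs w K n] that w_range \<open>q < real n * w\<close>
      by (simp add: g_def q_def K_def \<sigma>st_def)
  qed
  ultimately show ?thesis
    using bounds[of "1 - Afun w"] bounds[of 1] Afun_nonneg[of w] Afun_less_one[OF w_range]
    by auto
qed

end
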